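(* For every $S\subseteq\mathbb{Z}^2$ and real $\alpha$, $\Theta(S,\alpha)=\vartheta(S,\alpha,0)$.
   Context: Graph $\mathbf{G}$ on $\mathbb{Z}^2$: each $p$ is adjacent to $p\pm(1,0)$, $p\pm(0,1)$, $p+(-1,1)$, $p+(1,-1)$; connectedness and paths refer to $\mathbf{G}$ (paths "in $S$" use only vertices of $S$). Triangles: for reals $a,b,c$, $L(a,b,c)=\{(x,y): -x\le a,\ -y\le b,\ x+y\le c\}$, $\mathrm{span}(L(a,b,c))=a+b+c$, $D(L(a,b,c),d)=L(a-d,b-d,c-d)$. For $E\subseteq\mathbb{Z}^2$, $\mathrm{span}(E,d)$ is the minimum of $\sum_{I\in\mathcal{I}}\mathrm{span}(I)$ over finite sets $\mathcal{I}$ of triangles with $E\subseteq\bigcup_{I\in\mathcal{I}}D(I,d)$, and $\mathrm{Span}(E)=\mathrm{span}(E,2)$. A triple $(C,A_1,A_2)$ of pairwise disjoint subsets of $S$ is a cut of $S$ with parameters $|C|,m$ if every path in $S$ from $A_1$ to $A_2$ passes through an element of $C$, and $m=\min_{j=1,2}\mathrm{Span}(A_j\cup C)$. The cut is connected if both $A_1\cup C$ and $A_2\cup C$ are connected. $\Theta(S,\alpha)$ is the smallest $k$ such that $S$ has a cut with parameters $k,m$ with $m>\alpha k$ ($\infty$ if none). $\vartheta(S,\alpha,\beta)$ is the smallest $k$ such that $S$ has a connected cut with parameters $k,m$ with $m>\alpha k+\beta$ ($\infty$ if none). *)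

theory Defs
  imports Complex_Main "HOL-Library.Extended_Real" "HOL-Library.Extended_Nat"
begin

type_synonym pt = "int \<times> int"

definition adjG :: "pt \<Rightarrow> pt \<Rightarrow> bool" where
  "adjG p q \<longleftrightarrow> (fst q - fst p, snd q - snd p) \<in>
     {(1,0), (-1,0), (0,1), (0,-1), (-1,1), (1,-1)}"

definition path_in :: "pt set \<Rightarrow> pt list \<Rightarrow> bool" where
  "path_in X ps \<longleftrightarrow> ps \<noteq> [] \<and> set ps \<subseteq> X \<and>
     (\<forall>i. Suc i < length ps \<longrightarrow> adjG (ps ! i) (ps ! Suc i))"

definition connectedG :: "pt set \<Rightarrow> bool" where
  "connectedG X \<longleftrightarrow> (\<forall>p\<in>X. \<forall>q\<in>X. \<exists>ps. path_in X ps \<and> hd ps = p \<and> last ps = q)"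

text \<open>Triangle L(a,b,c), as a subset of R^2.  A triangle is represented by its
  parameter triple (a,b,c); triangles are nonempty, i.e. a+b+c \<ge> 0, so the triple is
  determined by the set and span is well defined.\<close>
definition Ltri :: "real \<Rightarrow> real \<Rightarrow> real \<Rightarrow> (real \<times> real) set" where
  "Ltri a b c = {(x,y). - x \<le> a \<and> - y \<le> b \<and> x + y \<le> c}"

definition is_triangle :: "real \<times> real \<times> real \<Rightarrow> bool" where
  "is_triangle t \<longleftrightarrow> (case t of (a,b,c) \<Rightarrow> Ltri a b c \<noteq> {})"

definition tspan :: "real \<times> real \<times> real \<Rightarrow> real" where
  "tspan t = (case t of (a,b,c) \<Rightarrow> a + b + c)"

definition Dtri :: "real \<times> real \<times> real \<Rightarrow> real \<Rightarrow> (real \<times> real) set" where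
  "Dtri t d = (case t of (a,b,c) \<Rightarrow> Ltri (a - d) (b - d) (c - d))"

text \<open>span(E,d): minimum (infimum in the extended reals; \<infinity> if no finite cover exists)
  of total span over finite families of triangles whose d-shrinkings cover E.\<close>
definition span_d :: "pt set \<Rightarrow> real \<Rightarrow> ereal" where
  "span_d E d = Inf {ereal (\<Sum>t\<in>\<I>. tspan t) | \<I>. finite \<I> \<and> (\<forall>t\<in>\<I>. is_triangle t) \<and>
      (\<forall>p\<in>E. \<exists>t\<in>\<I>. (real_of_int (fst p), real_of_int (snd p)) \<in> Dtri t d)}"

definition Span :: "pt set \<Rightarrow> ereal" where
  "Span E = span_d E 2"

definition is_cut :: "pt set \<Rightarrow> pt set \<Rightarrow> pt set \<Rightarrow> pt set \<Rightarrow> bool" where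
  "is_cut S C A1 A2 \<longleftrightarrow> C \<subseteq> S \<and> A1 \<subseteq> S \<and> A2 \<subseteq> S \<and>
     C \<inter> A1 = {} \<and> C \<inter> A2 = {} \<and> A1 \<inter> A2 = {} \<and>
     (\<forall>ps. path_in S ps \<and> hd ps \<in> A1 \<and> last ps \<in> A2 \<longrightarrow> (\<exists>v\<in>set ps. v \<in> C))"

definition cut_params :: "pt set \<Rightarrow> pt set \<Rightarrow> pt set \<Rightarrow> pt set \<Rightarrow> nat \<Rightarrow> ereal \<Rightarrow> bool" where
  "cut_params S C A1 A2 k m \<longleftrightarrow> is_cut S C A1 A2 \<and> finite C \<and> card C = k \<and>
     m = min (Span (A1 \<union> C)) (Span (A2 \<union> C))"

definition Theta :: "pt set \<Rightarrow> real \<Rightarrow> enat" where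
  "Theta S \<alpha> = Inf {enat k | k. \<exists>C A1 A2 m. cut_params S C A1 A2 k m \<and>
                                      m > ereal (\<alpha> * real k)}"

definition vartheta :: "pt set \<Rightarrow> real \<Rightarrow> real \<Rightarrow> enat" where
  "vartheta S \<alpha> \<beta> = Inf {enat k | k. \<exists>C A1 A2 m. cut_params S C A1 A2 k m \<and>
       connectedG (A1 \<union> C) \<and> connectedG (A2 \<union> C) \<and> m > ereal (\<alpha> * real k + \<beta>)}"

end

theory Submission
  imports Defs
begin

text \<open>Connected cuts are cuts, so \<open>\<Theta> \<le> \<vartheta>\<close>. Conversely, take a cut \<open>(C, A1, A2)\<close> with
  \<open>|C| = \<Theta>\<close>. If \<open>S\<close> is disconnected, two points in different components form a connected
  cut with \<open>C = {}\<close>; if \<open>\<alpha> < 0\<close>, a single vertex of \<open>S\<close> does. Otherwise enlarge \<open>A1\<close> to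
  everything it reaches in \<open>S - C\<close> and \<open>A2\<close> to the rest of \<open>S - C\<close>. If \<open>B \<union> C\<close> were
  disconnected for one of these sides \<open>B\<close>, split it into two pieces closed under adjacency.
  As \<open>S\<close> is connected, each piece misses a vertex of \<open>C\<close> and so induces a strictly smaller
  cut whose other side still contains the opposite heavy side; by minimality each piece has
  span at most \<open>\<alpha>\<close> times its share of \<open>C\<close>, and subadditivity of \<open>Span\<close> gives
  \<open>Span (B \<union> C) \<le> \<alpha> |C|\<close>, a contradiction.\<close>

section \<open>Span\<close>

definition tri_covers :: "pt set \<Rightarrow> real \<Rightarrow> (real \<times> real \<times> real) set set" where
  "tri_covers E d = {\<I>. finite \<I> \<and> (\<forall>t\<in>\<I>. is_triangle t) \<and>
      (\<forall>p\<in>E. \<exists>t\<in>\<I>. (real_of_int (fst p), real_of_int (snd p)) \<in> Dtri t d)}"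

lemma span_d_eq_INF: "span_d E d = (INF \<I>\<in>tri_covers E d. ereal (\<Sum>t\<in>\<I>. tspan t))"
  unfolding span_d_def tri_covers_def by (simp add: setcompr_eq_image)

lemma tspan_nonneg: "is_triangle t \<Longrightarrow> 0 \<le> tspan t"
  by (cases t) (auto simp: is_triangle_def tspan_def Ltri_def)

lemma sum_tspan_nonneg: "\<I> \<in> tri_covers E d \<Longrightarrow> 0 \<le> (\<Sum>t\<in>\<I>. tspan t)"
  unfolding tri_covers_def by (auto intro: sum_nonneg tspan_nonneg)

lemma span_d_nonneg: "0 \<le> span_d E d"
  unfolding span_d_eq_INF by (intro INF_greatest) (simp add: sum_tspan_nonneg)

lemma span_d_mono: "E \<subseteq> F \<Longrightarrow> span_d E d \<le> span_d F d"
  unfolding span_d_eq_INF by (intro INF_superset_mono) (auto simp: tri_covers_def)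

lemma span_d_empty: "span_d {} d = 0"
proof (rule antisym)
  have "{} \<in> tri_covers {} d" by (simp add: tri_covers_def)
  then show "span_d {} d \<le> 0"
    unfolding span_d_eq_INF by (metis INF_lower sum.empty zero_ereal_def)
qed (rule span_d_nonneg)

text \<open>A lattice point in the shrinking \<open>D(L(a,b,c),d)\<close> forces \<open>a + b + c \<ge> 3d\<close>.\<close>
lemma span_d_singleton_ge: "ereal (3 * d) \<le> span_d {p} d"
  unfolding span_d_eq_INF
proof (intro INF_greatest)
  fix \<I> assume \<I>: "\<I> \<in> tri_covers {p} d"
  then obtain t where t: "t \<in> \<I>" "(real_of_int (fst p), real_of_int (snd p)) \<in> Dtri t d"
    by (auto simp: tri_covers_def)
  have "3 * d \<le> tspan t"
    using t(2) by (cases t) (auto simp: Dtri_def Ltri_def tspan_def)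
  also have "\<dots> \<le> (\<Sum>t\<in>\<I>. tspan t)"
    using \<I> t(1) by (intro member_le_sum) (auto simp: tri_covers_def tspan_nonneg)
  finally show "ereal (3 * d) \<le> ereal (\<Sum>t\<in>\<I>. tspan t)" by simp
qed

lemma tri_covers_Un:
  "\<I> \<in> tri_covers E d \<Longrightarrow> \<J> \<in> tri_covers F d \<Longrightarrow> \<I> \<union> \<J> \<in> tri_covers (E \<union> F) d"
  unfolding tri_covers_def by blast

lemma sum_tspan_Un_le:
  assumes "\<I> \<in> tri_covers E d" "\<J> \<in> tri_covers F d"
  shows "(\<Sum>t\<in>\<I> \<union> \<J>. tspan t) \<le> (\<Sum>t\<in>\<I>. tspan t) + (\<Sum>t\<in>\<J>. tspan t)"
proof -
  have "0 \<le> (\<Sum>t\<in>\<I> \<inter> \<J>. tspan t)"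
    using assms by (intro sum_nonneg) (auto simp: tri_covers_def tspan_nonneg)
  with assms show ?thesis by (simp add: tri_covers_def sum_Un)
qed

lemma span_d_Un_le: "span_d (E \<union> F) d \<le> span_d E d + span_d F d"
proof (cases "tri_covers E d = {} \<or> tri_covers F d = {}")
  case True
  then have "span_d E d = \<infinity> \<or> span_d F d = \<infinity>"
    by (auto simp: span_d_eq_INF top_ereal_def)
  then show ?thesis
    using span_d_nonneg[of E d] span_d_nonneg[of F d] by auto
next
  case False
  let ?f = "\<lambda>\<I>. ereal (\<Sum>t\<in>\<I>. tspan t)"
  have "span_d (E \<union> F) d \<le> (INF \<I>\<in>tri_covers E d. INF \<J>\<in>tri_covers F d. ?f \<I> + ?f \<J>)"
    unfolding span_d_eq_INF
    by (intro INF_greatest INF_lower2[OF tri_covers_Un]) (auto intro: sum_tspan_Un_le)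
  also have "\<dots> = (INF \<I>\<in>tri_covers E d. ?f \<I> + span_d F d)"
    unfolding span_d_eq_INF using False
    by (intro INF_cong refl INF_ereal_add_right) (auto intro: sum_tspan_nonneg)
  also have "\<dots> = span_d E d + span_d F d"
    unfolding span_d_eq_INF[of E] using False span_d_nonneg[of F d]
    by (intro INF_ereal_add_left) (auto intro: sum_tspan_nonneg)
  finally show ?thesis .
qed

lemma Span_mono: "E \<subseteq> F \<Longrightarrow> Span E \<le> Span F"
  unfolding Span_def by (rule span_d_mono)

lemma Span_empty: "Span {} = 0"
  unfolding Span_def by (rule span_d_empty)

lemma Span_singleton_ge: "6 \<le> Span {p}"
  using span_d_singleton_ge[of 2 p] by (simp add: Span_def)

lemma Span_singleton_gt: "r < 6 \<Longrightarrow> ereal r < Span {p}"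
  using order_less_le_trans[OF _ Span_singleton_ge, of r p] by simp

lemma Span_Un_le:
  assumes "Span E \<le> ereal x" "Span F \<le> ereal y"
  shows "Span (E \<union> F) \<le> ereal (x + y)"
  using span_d_Un_le[of E F 2] add_mono[OF assms] by (simp add: Span_def)

section \<open>Paths and closed sets\<close>

definition adj_closed :: "pt set \<Rightarrow> pt set \<Rightarrow> bool" where
  "adj_closed X P \<longleftrightarrow> P \<subseteq> X \<and> (\<forall>v\<in>P. \<forall>w\<in>X. adjG v w \<longrightarrow> w \<in> P)"

definition reachable :: "pt set \<Rightarrow> pt set \<Rightarrow> pt set" where
  "reachable X A = {last ps | ps. path_in X ps \<and> hd ps \<in> A}"

lemma path_in_singleton: "path_in X [p] \<longleftrightarrow> p \<in> X"
  unfolding path_in_def by auto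

lemma path_in_snoc:
  assumes "path_in X ps" "x \<in> X" "adjG (last ps) x"
  shows "path_in X (ps @ [x])"
  unfolding path_in_def
proof (intro conjI allI impI)
  fix i assume "Suc i < length (ps @ [x])"
  then consider "Suc i < length ps" | "Suc i = length ps" by fastforce
  then show "adjG ((ps @ [x]) ! i) ((ps @ [x]) ! Suc i)"
  proof cases
    case 1
    with assms(1) show ?thesis by (simp add: path_in_def nth_append)
  next
    case 2
    then have "i = length ps - 1" by simp
    with 2 assms show ?thesis by (simp add: path_in_def nth_append last_conv_nth)
  qed
qed (use assms in \<open>auto simp: path_in_def\<close>)

lemma path_in_subset_adj_closed:
  assumes "path_in X ps" "adj_closed X P" "hd ps \<in> P"
  shows "set ps \<subseteq> P"
proof -
  have "ps ! i \<in> P" if "i < length ps" for i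
    using that
  proof (induction i)
    case 0
    with assms(1,3) show ?case by (simp add: path_in_def hd_conv_nth)
  next
    case (Suc i)
    then have "ps ! i \<in> P" "ps ! Suc i \<in> X" "adjG (ps ! i) (ps ! Suc i)"
      using assms(1) by (auto simp: path_in_def)
    with assms(2) show ?case by (auto simp: adj_closed_def)
  qed
  then show ?thesis by (metis in_set_conv_nth subsetI)
qed

lemma adj_closed_Diff: "adj_closed X P \<Longrightarrow> adj_closed X (X - P)"
  unfolding adj_closed_def adjG_def by fastforce

lemma subset_reachable: "A \<subseteq> X \<Longrightarrow> A \<subseteq> reachable X A"
  unfolding reachable_def by (auto intro!: exI[of _ "[_]"] simp: path_in_singleton)

lemma adj_closed_reachable: "adj_closed X (reachable X A)"
  unfolding adj_closed_def reachable_def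
proof (intro conjI ballI impI subsetI)
  fix v assume "v \<in> {last ps |ps. path_in X ps \<and> hd ps \<in> A}"
  then show "v \<in> X" by (auto simp: path_in_def)
next
  fix v w assume "v \<in> {last ps |ps. path_in X ps \<and> hd ps \<in> A}" "w \<in> X" "adjG v w"
  then obtain ps where "path_in X ps" "hd ps \<in> A" "last ps = v" "w \<in> X" "adjG (last ps) w"
    by auto
  moreover from this have "path_in X (ps @ [w])" by (intro path_in_snoc)
  ultimately show "w \<in> {last ps |ps. path_in X ps \<and> hd ps \<in> A}"
    by (intro CollectI exI[of _ "ps @ [w]"]) (auto simp: path_in_def)
qed

lemma connectedG_iff_adj_closed: "connectedG X \<longleftrightarrow> (\<forall>P. adj_closed X P \<longrightarrow> P = {} \<or> P = X)"
proof
  assume conn: "connectedG X"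
  show "\<forall>P. adj_closed X P \<longrightarrow> P = {} \<or> P = X"
  proof (intro allI impI)
    fix P assume P: "adj_closed X P"
    have "X \<subseteq> P" if "p \<in> P" for p
    proof
      fix q assume "q \<in> X"
      then obtain ps where "path_in X ps" "hd ps = p" "last ps = q"
        using conn P \<open>p \<in> P\<close> unfolding connectedG_def adj_closed_def by blast
      with P \<open>p \<in> P\<close> show "q \<in> P"
        using path_in_subset_adj_closed last_in_set by (metis path_in_def subsetD)
    qed
    with P show "P = {} \<or> P = X" by (auto simp: adj_closed_def)
  qed
next
  assume closed: "\<forall>P. adj_closed X P \<longrightarrow> P = {} \<or> P = X"
  show "connectedG X"
    unfolding connectedG_def
  proof (intro ballI)
    fix p q assume "p \<in> X" "q \<in> X"
    then have "reachable X {p} = X"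
      using closed adj_closed_reachable subset_reachable[of "{p}" X] by blast
    with \<open>q \<in> X\<close> have "q \<in> reachable X {p}" by simp
    then show "\<exists>ps. path_in X ps \<and> hd ps = p \<and> last ps = q"
      by (auto simp: reachable_def)
  qed
qed

lemma connectedG_singleton: "connectedG {p}"
  unfolding connectedG_def by (auto intro: exI[of _ "[p]"] simp: path_in_singleton)

section \<open>Cuts\<close>

lemma is_cut_of_adj_closed:
  assumes "C \<subseteq> S" "adj_closed (S - C) P" "A1 \<subseteq> P" "A2 \<subseteq> S - C - P"
  shows "is_cut S C A1 A2"
  unfolding is_cut_def
proof (intro conjI allI impI)
  fix ps assume ps: "path_in S ps \<and> hd ps \<in> A1 \<and> last ps \<in> A2"
  show "\<exists>v\<in>set ps. v \<in> C"
  proof (rule ccontr)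
    assume "\<not> (\<exists>v\<in>set ps. v \<in> C)"
    with ps have "path_in (S - C) ps" by (auto simp: path_in_def)
    with assms(2,3) ps have "set ps \<subseteq> P" by (intro path_in_subset_adj_closed) auto
    with ps assms(4) show False by (metis Diff_iff last_in_set path_in_def subsetD)
  qed
qed (use assms in \<open>auto simp: adj_closed_def\<close>)

lemma adj_closed_piece:
  assumes B: "adj_closed (S - C) B" and P: "adj_closed (B \<union> C) P"
  shows "adj_closed (S - P \<inter> C) (P - C)"
  unfolding adj_closed_def
proof (intro conjI ballI impI)
  show "P - C \<subseteq> S - P \<inter> C" using B P by (auto simp: adj_closed_def)
next
  fix v w assume v: "v \<in> P - C" and w: "w \<in> S - P \<inter> C" "adjG v w"
  from v P have "v \<in> B" by (auto simp: adj_closed_def)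
  with w B have "w \<in> B \<union> C" by (auto simp: adj_closed_def)
  with v w P have "w \<in> P" by (auto simp: adj_closed_def)
  with w show "w \<in> P - C" by auto
qed

lemma is_cut_empty_if_connectedG:
  assumes "connectedG S" "is_cut S {} A1 A2"
  shows "A1 = {} \<or> A2 = {}"
proof (rule ccontr)
  assume "\<not> (A1 = {} \<or> A2 = {})"
  then obtain a1 a2 where a: "a1 \<in> A1" "a2 \<in> A2" by auto
  with assms have "a1 \<in> S" "a2 \<in> S" by (auto simp: is_cut_def)
  with assms(1) obtain ps where "path_in S ps" "hd ps = a1" "last ps = a2"
    unfolding connectedG_def by blast
  with assms(2) a show False unfolding is_cut_def by blast
qed

definition exceeding_cut :: "pt set \<Rightarrow> real \<Rightarrow> real \<Rightarrow> pt set \<Rightarrow> pt set \<Rightarrow> pt set \<Rightarrow> bool" where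
  "exceeding_cut S \<alpha> \<beta> C A1 A2 \<longleftrightarrow> is_cut S C A1 A2 \<and> finite C \<and>
     ereal (\<alpha> * card C + \<beta>) < min (Span (A1 \<union> C)) (Span (A2 \<union> C))"

lemma exceeding_cut_mono:
  "\<beta>' \<le> \<beta> \<Longrightarrow> exceeding_cut S \<alpha> \<beta> C A1 A2 \<Longrightarrow> exceeding_cut S \<alpha> \<beta>' C A1 A2"
  unfolding exceeding_cut_def
  using order_le_less_trans[of "ereal (\<alpha> * card C + \<beta>')" "ereal (\<alpha> * card C + \<beta>)"] by simp

lemma Theta_eq_Inf: "Theta S \<alpha> = Inf {enat (card C) | C A1 A2. exceeding_cut S \<alpha> 0 C A1 A2}"
  unfolding Theta_def exceeding_cut_def cut_params_def by (intro arg_cong[where f = Inf]) force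

lemma vartheta_eq_Inf:
  "vartheta S \<alpha> \<beta> = Inf {enat (card C) | C A1 A2. exceeding_cut S \<alpha> \<beta> C A1 A2 \<and>
     connectedG (A1 \<union> C) \<and> connectedG (A2 \<union> C)}"
  unfolding vartheta_def exceeding_cut_def cut_params_def by (intro arg_cong[where f = Inf]) force

lemma Theta_le_vartheta: "0 \<le> \<beta> \<Longrightarrow> Theta S \<alpha> \<le> vartheta S \<alpha> \<beta>"
  unfolding Theta_eq_Inf vartheta_eq_Inf
  by (intro Inf_superset_mono) (blast dest: exceeding_cut_mono[of 0 \<beta>])

lemma Theta_le_card: "exceeding_cut S \<alpha> 0 C A1 A2 \<Longrightarrow> Theta S \<alpha> \<le> enat (card C)"
  unfolding Theta_eq_Inf by (intro Inf_lower) blast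

lemma Theta_attained:
  assumes "Theta S \<alpha> = enat k"
  obtains C A1 A2 where "exceeding_cut S \<alpha> 0 C A1 A2" "Theta S \<alpha> = enat (card C)"
proof -
  let ?T = "{enat (card C) | C A1 A2. exceeding_cut S \<alpha> 0 C A1 A2}"
  have "?T \<noteq> {}"
  proof
    assume "?T = {}"
    then have "Theta S \<alpha> = \<infinity>" by (simp add: Theta_eq_Inf top_enat_def)
    with assms show False by simp
  qed
  then obtain k' where "k' \<in> ?T" by blast
  then have "Inf ?T \<in> ?T" by (rule wellorder_InfI)
  then obtain C A1 A2 where "exceeding_cut S \<alpha> 0 C A1 A2" "Inf ?T = enat (card C)"
    by blast
  with assms that show ?thesis by (simp add: Theta_eq_Inf)
qed

lemma card_le_of_Theta_eq:
  "Theta S \<alpha> = enat (card C) \<Longrightarrow> exceeding_cut S \<alpha> 0 C' A1 A2 \<Longrightarrow> card C \<le> card C'"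
  using Theta_le_card by fastforce

lemma vartheta_le_card:
  "exceeding_cut S \<alpha> \<beta> C A1 A2 \<Longrightarrow> connectedG (A1 \<union> C) \<Longrightarrow> connectedG (A2 \<union> C) \<Longrightarrow>
    vartheta S \<alpha> \<beta> \<le> enat (card C)"
  unfolding vartheta_eq_Inf by (intro Inf_lower) blast

lemma vartheta_not_connectedG: "\<beta> < 6 \<Longrightarrow> \<not> connectedG S \<Longrightarrow> vartheta S \<alpha> \<beta> = 0"
proof -
  assume "\<beta> < 6" "\<not> connectedG S"
  then obtain P where P: "adj_closed S P" "P \<noteq> {}" "P \<noteq> S"
    by (auto simp: connectedG_iff_adj_closed)
  then obtain p q where "p \<in> P" "q \<in> S - P" by (auto simp: adj_closed_def)
  with P have "is_cut S {} {p} {q}" by (intro is_cut_of_adj_closed[where P = P]) auto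
  with \<open>\<beta> < 6\<close> have "exceeding_cut S \<alpha> \<beta> {} {p} {q}"
    by (simp add: exceeding_cut_def Span_singleton_gt)
  then have "vartheta S \<alpha> \<beta> \<le> enat 0"
    using vartheta_le_card[of S \<alpha> \<beta> "{}" "{p}" "{q}"] by (simp add: connectedG_singleton)
  then show ?thesis by (simp add: zero_enat_def[symmetric])
qed

lemma vartheta_le_one: "\<alpha> + \<beta> < 6 \<Longrightarrow> c \<in> S \<Longrightarrow> vartheta S \<alpha> \<beta> \<le> 1"
proof -
  assume "\<alpha> + \<beta> < 6" "c \<in> S"
  then have "is_cut S {c} {} {}" by (simp add: is_cut_def)
  with \<open>\<alpha> + \<beta> < 6\<close> have "exceeding_cut S \<alpha> \<beta> {c} {} {}"
    by (simp add: exceeding_cut_def Span_singleton_gt)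
  then have "vartheta S \<alpha> \<beta> \<le> enat 1"
    using vartheta_le_card[of S \<alpha> \<beta> "{c}" "{}" "{}"] by (simp add: connectedG_singleton)
  then show ?thesis by (simp add: one_enat_def)
qed

lemma exceeding_cut_nonempty:
  assumes "connectedG S" "0 \<le> \<beta>" "exceeding_cut S \<alpha> \<beta> C A1 A2"
  shows "C \<noteq> {}"
proof
  assume "C = {}"
  with assms have "A1 = {} \<or> A2 = {}"
    by (intro is_cut_empty_if_connectedG) (auto simp: exceeding_cut_def)
  with assms \<open>C = {}\<close> show False by (auto simp: exceeding_cut_def Span_empty)
qed

section \<open>Minimal cuts have connected sides\<close>

text \<open>Since \<open>P\<close> misses part of \<open>C\<close>, \<open>(P \<inter> C, P - C, B' \<union> (C - P))\<close> is a cut smaller than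
  the minimum one; its second side still has span above \<open>\<alpha> |C|\<close>, so its first side cannot.\<close>
lemma Span_piece_le:
  assumes Theta: "Theta S \<alpha> = enat (card C)"
    and C: "finite C" "C \<subseteq> S" and "0 \<le> \<alpha>"
    and B: "adj_closed (S - C) B" and P: "adj_closed (B \<union> C) P" "\<not> C \<subseteq> P"
    and B': "B' \<subseteq> S - C - B" "ereal (\<alpha> * card C) < Span (B' \<union> C)"
  shows "Span P \<le> ereal (\<alpha> * card (P \<inter> C))"
proof -
  have cut: "is_cut S (P \<inter> C) (P - C) (B' \<union> (C - P))"
    using C B P B' by (intro is_cut_of_adj_closed[OF _ adj_closed_piece[OF B P(1)]])
      (auto simp: adj_closed_def)
  have smaller: "card (P \<inter> C) < card C"
    using C P(2) by (intro psubset_card_mono) auto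
  then have "\<alpha> * card (P \<inter> C) \<le> \<alpha> * card C"
    using \<open>0 \<le> \<alpha>\<close> by (intro mult_left_mono) auto
  moreover have "B' \<union> (C - P) \<union> P \<inter> C = B' \<union> C" by auto
  ultimately have heavy: "ereal (\<alpha> * card (P \<inter> C)) < Span (B' \<union> (C - P) \<union> P \<inter> C)"
    using B'(2) order_le_less_trans[of "ereal (\<alpha> * card (P \<inter> C))" "ereal (\<alpha> * card C)"]
    by simp
  have "\<not> exceeding_cut S \<alpha> 0 (P \<inter> C) (P - C) (B' \<union> (C - P))"
    using smaller card_le_of_Theta_eq[OF Theta] by (meson not_le)
  moreover have "P - C \<union> P \<inter> C = P" by auto
  ultimately show ?thesis
    using cut heavy C by (auto simp: exceeding_cut_def not_less min_le_iff_disj)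
qed

lemma not_subset_proper_piece:
  assumes "connectedG S" "C \<noteq> {}" "C \<subseteq> S"
    and B: "adj_closed (S - C) B" and P: "adj_closed (B \<union> C) P" "P \<noteq> B \<union> C"
  shows "\<not> C \<subseteq> P"
proof
  assume "C \<subseteq> P"
  define Q where "Q = B \<union> C - P"
  have "adj_closed (B \<union> C) Q" unfolding Q_def using P(1) by (rule adj_closed_Diff)
  moreover have "Q \<inter> C = {}" using \<open>C \<subseteq> P\<close> by (auto simp: Q_def)
  ultimately have "adj_closed S Q"
    using adj_closed_piece[OF B] by (metis Diff_empty Diff_triv)
  moreover have "Q \<noteq> {}" "Q \<noteq> S"
    using P \<open>C \<subseteq> P\<close> assms(2,3) by (auto simp: Q_def adj_closed_def)
  ultimately show False
    using \<open>connectedG S\<close> by (auto simp: connectedG_iff_adj_closed)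
qed

lemma connectedG_side_of_minimal_cut:
  assumes Theta: "Theta S \<alpha> = enat (card C)"
    and S: "connectedG S" and C: "finite C" "C \<noteq> {}" "C \<subseteq> S" and "0 \<le> \<alpha>"
    and B: "adj_closed (S - C) B" and B': "B' \<subseteq> S - C - B"
    and heavy: "ereal (\<alpha> * card C) < Span (B \<union> C)" "ereal (\<alpha> * card C) < Span (B' \<union> C)"
  shows "connectedG (B \<union> C)"
proof (rule ccontr)
  assume "\<not> connectedG (B \<union> C)"
  then obtain K where K: "adj_closed (B \<union> C) K" "K \<noteq> {}" "K \<noteq> B \<union> C"
    by (auto simp: connectedG_iff_adj_closed)
  define L where "L = B \<union> C - K"
  have "K \<subseteq> B \<union> C" using K(1) by (simp add: adj_closed_def)
  have L: "adj_closed (B \<union> C) L" "L \<noteq> B \<union> C"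
    unfolding L_def using adj_closed_Diff[OF K(1)] \<open>K \<subseteq> B \<union> C\<close> K(2) by blast+
  have light: "Span P \<le> ereal (\<alpha> * card (P \<inter> C))" if "adj_closed (B \<union> C) P" "P \<noteq> B \<union> C" for P
  proof (rule Span_piece_le[of S \<alpha> C B P B'])
    show "\<not> C \<subseteq> P" using S C(2,3) B that by (rule not_subset_proper_piece)
  qed (use Theta C \<open>0 \<le> \<alpha>\<close> B that B' heavy in auto)
  have "K \<union> L = B \<union> C" using \<open>K \<subseteq> B \<union> C\<close> by (auto simp: L_def)
  moreover have "card (K \<inter> C) + card (L \<inter> C) = card C"
  proof -
    have "K \<inter> C \<union> L \<inter> C = C" "K \<inter> C \<inter> (L \<inter> C) = {}"
      using \<open>K \<subseteq> B \<union> C\<close> by (auto simp: L_def)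
    with C(1) show ?thesis by (metis card_Un_disjoint finite_Int)
  qed
  ultimately have "Span (B \<union> C) \<le> ereal (\<alpha> * card C)"
    using Span_Un_le[OF light[OF K(1,3)] light[OF L]] by (simp add: distrib_left[symmetric] flip: of_nat_add)
  with heavy(1) show False by simp
qed

text \<open>Replacing \<open>A1\<close> by everything it reaches in \<open>S - C\<close>, and \<open>A2\<close> by the rest of
  \<open>S - C\<close>, keeps the cut and only enlarges the spans.\<close>
lemma minimal_cut_connected_sides:
  assumes Theta: "Theta S \<alpha> = enat (card C)"
    and S: "connectedG S" and "0 \<le> \<alpha>" and cut: "exceeding_cut S \<alpha> 0 C A1 A2"
  obtains A1' A2' where "exceeding_cut S \<alpha> 0 C A1' A2'"
    "connectedG (A1' \<union> C)" "connectedG (A2' \<union> C)"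
proof -
  from cut have C: "finite C" "C \<noteq> {}" "C \<subseteq> S"
    using exceeding_cut_nonempty[OF S _ cut] by (auto simp: exceeding_cut_def is_cut_def)
  from cut have A: "A1 \<subseteq> S - C" "A2 \<subseteq> S - C" by (auto simp: exceeding_cut_def is_cut_def)
  define R where "R = reachable (S - C) A1"
  define R' where "R' = S - C - R"
  have R: "adj_closed (S - C) R" and R': "adj_closed (S - C) R'"
    unfolding R'_def R_def by (simp_all add: adj_closed_reachable adj_closed_Diff)
  have "A1 \<subseteq> R" unfolding R_def using A(1) by (rule subset_reachable)
  have "A2 \<subseteq> R'"
  proof
    fix x assume "x \<in> A2"
    show "x \<in> R'"
    proof (rule ccontr)
      assume "x \<notin> R'"
      with \<open>x \<in> A2\<close> A(2) obtain ps where "path_in (S - C) ps" "hd ps \<in> A1" "last ps = x"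
        by (auto simp: R'_def R_def reachable_def)
      with cut \<open>x \<in> A2\<close> show False
        unfolding exceeding_cut_def is_cut_def path_in_def by blast
    qed
  qed
  have "Span (A1 \<union> C) \<le> Span (R \<union> C)" "Span (A2 \<union> C) \<le> Span (R' \<union> C)"
    using \<open>A1 \<subseteq> R\<close> \<open>A2 \<subseteq> R'\<close> by (auto intro: Span_mono)
  with cut have heavy: "ereal (\<alpha> * card C) < Span (R \<union> C)" "ereal (\<alpha> * card C) < Span (R' \<union> C)"
    by (auto simp: exceeding_cut_def intro: order_less_le_trans)
  have "is_cut S C R R'"
    using C(3) R by (rule is_cut_of_adj_closed) (auto simp: R'_def)
  moreover have "R \<subseteq> S - C - R'" "R' \<subseteq> S - C - R"
    using R by (auto simp: R'_def adj_closed_def)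
  ultimately show ?thesis
    using that heavy connectedG_side_of_minimal_cut[OF Theta S C \<open>0 \<le> \<alpha>\<close>] R R' C(1)
    by (simp add: exceeding_cut_def)
qed

lemma vartheta_le_card_of_minimal_cut:
  assumes Theta: "Theta S \<alpha> = enat (card C)"
    and cut: "exceeding_cut S \<alpha> 0 C A1 A2"
  shows "vartheta S \<alpha> 0 \<le> enat (card C)"
proof (cases "connectedG S")
  case False
  then show ?thesis by (simp add: vartheta_not_connectedG)
next
  case S: True
  show ?thesis
  proof (cases "0 \<le> \<alpha>")
    case True
    from Theta S True cut obtain A1' A2' where "exceeding_cut S \<alpha> 0 C A1' A2'"
      "connectedG (A1' \<union> C)" "connectedG (A2' \<union> C)"
      by (rule minimal_cut_connected_sides)
    then show ?thesis by (rule vartheta_le_card)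
  next
    case False
    have "C \<noteq> {}" "finite C" "C \<subseteq> S"
      using exceeding_cut_nonempty[OF S _ cut] cut by (auto simp: exceeding_cut_def is_cut_def)
    then obtain c where "c \<in> S" "1 \<le> card C"
      by (metis card_0_eq less_one not_le subset_empty subset_eq)
    with False have "vartheta S \<alpha> 0 \<le> 1" by (intro vartheta_le_one) auto
    with \<open>1 \<le> card C\<close> show ?thesis
      by (metis one_enat_def enat_ord_simps(1) order_trans)
  qed
qed

theorem theorem3p3:
  fixes S :: "(int \<times> int) set" and \<alpha> :: real
  shows "Theta S \<alpha> = vartheta S \<alpha> 0"
proof (rule antisym)
  show "Theta S \<alpha> \<le> vartheta S \<alpha> 0" by (rule Theta_le_vartheta) simp
  show "vartheta S \<alpha> 0 \<le> Theta S \<alpha>"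
  proof (cases "Theta S \<alpha>")
    case (enat k)
    then obtain C A1 A2 where "exceeding_cut S \<alpha> 0 C A1 A2" "Theta S \<alpha> = enat (card C)"
      by (rule Theta_attained)
    then show ?thesis by (metis vartheta_le_card_of_minimal_cut)
  qed simp
qed

end
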